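(* Let $G$ be a graph with $n$ vertices and let $q>0$. It is possible to delete at most $qn^2$ edges from $G$ to obtain a subgraph all of whose connected components are $q$-cut-dense.
   Context: A graph $F$ is $q$-cut-dense if for every partition $V(F)=A\cup B$ into disjoint sets, the number of edges of $F$ between $A$ and $B$ is at least $q|A||B|$. *)

theory Defs
  imports Complex_Main
begin

definition simple_graph :: "'a set \<Rightarrow> 'a set set \<Rightarrow> bool" where
  "simple_graph V E \<longleftrightarrow> finite V \<and> (\<forall>e\<in>E. e \<subseteq> V \<and> card e = 2)"

definition cut_edges :: "'a set set \<Rightarrow> 'a set \<Rightarrow> 'a set \<Rightarrow> 'a set set" where
  "cut_edges F A B = {e \<in> F. \<exists>u\<in>A. \<exists>v\<in>B. e = {u, v}}"

definition cut_dense :: "real \<Rightarrow> 'a set \<Rightarrow> 'a set set \<Rightarrow> bool" where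
  "cut_dense q V F \<longleftrightarrow>
     (\<forall>A B. A \<union> B = V \<and> A \<inter> B = {} \<longrightarrow>
        real (card (cut_edges F A B)) \<ge> q * real (card A) * real (card B))"

definition adjacent :: "'a set set \<Rightarrow> 'a \<Rightarrow> 'a \<Rightarrow> bool" where
  "adjacent F u v \<longleftrightarrow> {u, v} \<in> F"

definition component :: "'a set \<Rightarrow> 'a set set \<Rightarrow> 'a \<Rightarrow> 'a set" where
  "component V F v = {u \<in> V. (adjacent F)\<^sup>*\<^sup>* v u}"

definition components :: "'a set \<Rightarrow> 'a set set \<Rightarrow> 'a set set" where
  "components V F = component V F ` V"

definition induced_edges :: "'a set set \<Rightarrow> 'a set \<Rightarrow> 'a set set" where
  "induced_edges F C = {e \<in> F. e \<subseteq> C}"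

end

theory Submission
  imports Defs
begin

text \<open>Let \<open>\<Phi>(F)\<close> be the number of ordered pairs of vertices joined by a
  path in \<open>(V,F)\<close>, so \<open>\<Phi>(E) \<le> n\<^sup>2\<close>. As long as some component \<open>C\<close> is not \<open>q\<close>-cut-dense, it has
  a partition \<open>C = A \<union> B\<close> with fewer than \<open>q|A||B|\<close> edges across; deleting them disconnects all
  pairs in \<open>A \<times> B\<close>, so \<open>\<Phi>\<close> drops by at least \<open>|A||B|\<close>. Every deleted edge is thus paid for by
  a drop of \<open>1/q\<close> in \<open>\<Phi>\<close>, and the total number of deletions is at most \<open>q n\<^sup>2\<close>.\<close>

definition connected_pairs :: "'a set \<Rightarrow> 'a set set \<Rightarrow> ('a \<times> 'a) set" where
  "connected_pairs V F = {p \<in> V \<times> V. (adjacent F)\<^sup>*\<^sup>* (fst p) (snd p)}"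

lemma adjacent_sym: "adjacent F u v \<Longrightarrow> adjacent F v u"
  by (simp add: adjacent_def insert_commute)

lemma rtranclp_adjacent_sym: "(adjacent F)\<^sup>*\<^sup>* u v \<Longrightarrow> (adjacent F)\<^sup>*\<^sup>* v u"
proof (induction rule: rtranclp_induct)
  case (step y z)
  then show ?case by (meson adjacent_sym converse_rtranclp_into_rtranclp)
qed simp

lemma rtranclp_adjacent_mono:
  "F' \<subseteq> F \<Longrightarrow> (adjacent F')\<^sup>*\<^sup>* u v \<Longrightarrow> (adjacent F)\<^sup>*\<^sup>* u v"
  by (metis adjacent_def mono_rtranclp subsetD)

lemma finite_connected_pairs: "finite V \<Longrightarrow> finite (connected_pairs V F)"
  by (simp add: connected_pairs_def)

lemma card_connected_pairs_le: "finite V \<Longrightarrow> card (connected_pairs V F) \<le> card V ^ 2"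
proof -
  assume "finite V"
  then have "card (connected_pairs V F) \<le> card (V \<times> V)"
    by (intro card_mono) (auto simp: connected_pairs_def)
  then show ?thesis by (simp add: card_cartesian_product power2_eq_square)
qed

lemma connected_pairs_mono: "F' \<subseteq> F \<Longrightarrow> connected_pairs V F' \<subseteq> connected_pairs V F"
  by (auto simp: connected_pairs_def intro: rtranclp_adjacent_mono)

lemma component_times_component_subset_connected_pairs:
  "component V F v \<times> component V F v \<subseteq> connected_pairs V F"
proof clarify
  fix a b assume "a \<in> component V F v" "b \<in> component V F v"
  then have "a \<in> V" "b \<in> V" "(adjacent F)\<^sup>*\<^sup>* a v" "(adjacent F)\<^sup>*\<^sup>* v b"
    by (auto simp: component_def intro: rtranclp_adjacent_sym)
  then show "(a, b) \<in> connected_pairs V F"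
    by (auto simp: connected_pairs_def intro: rtranclp_trans)
qed

text \<open>No edge of \<open>F\<close> leaves a component, so once the \<open>A\<close>--\<open>B\<close> edges inside it are
  deleted, no path can cross from \<open>A\<close> to \<open>B\<close>.\<close>

lemma reachable_after_cut_stays:
  assumes edges: "\<forall>e\<in>F. e \<subseteq> V"
    and AB: "A \<union> B = component V F v" "A \<inter> B = {}"
    and path: "(adjacent (F - cut_edges (induced_edges F (component V F v)) A B))\<^sup>*\<^sup>* a w"
    and "a \<in> A"
  shows "w \<in> A"
  using path
proof (induction rule: rtranclp_induct)
  case base
  show ?case using \<open>a \<in> A\<close> .
next
  case (step y z)
  let ?C = "component V F v"
  have yz: "{y, z} \<in> F" "{y, z} \<notin> cut_edges (induced_edges F ?C) A B"
    using step(2) by (auto simp: adjacent_def)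
  have "y \<in> ?C" using step(3) AB by auto
  moreover have "adjacent F y z" using yz by (simp add: adjacent_def)
  moreover have "z \<in> V" using edges yz by auto
  ultimately have "z \<in> ?C" by (auto simp: component_def)
  show ?case
  proof (rule ccontr)
    assume "z \<notin> A"
    with \<open>z \<in> ?C\<close> AB have "z \<in> B" by auto
    with yz(1) \<open>y \<in> ?C\<close> \<open>z \<in> ?C\<close> step(3)
    have "{y, z} \<in> cut_edges (induced_edges F ?C) A B"
      by (auto simp: cut_edges_def induced_edges_def)
    with yz(2) show False ..
  qed
qed

lemma connected_pairs_cut_subset:
  assumes "\<forall>e\<in>F. e \<subseteq> V"
    and "A \<union> B = component V F v" "A \<inter> B = {}"
  shows "connected_pairs V (F - cut_edges (induced_edges F (component V F v)) A B)
           \<subseteq> connected_pairs V F - A \<times> B"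
proof -
  have "(a, b) \<notin> connected_pairs V (F - cut_edges (induced_edges F (component V F v)) A B)"
    if "a \<in> A" "b \<in> B" for a b
    using reachable_after_cut_stays[OF assms _ \<open>a \<in> A\<close>, of b] that assms(3)
    by (auto simp: connected_pairs_def)
  then show ?thesis using connected_pairs_mono[of _ F V] by blast
qed

lemma delete_sparse_cut:
  assumes "finite V" and edges: "\<forall>e\<in>F. e \<subseteq> V" and "q > 0"
    and sparse: "\<not> cut_dense q (component V F v) (induced_edges F (component V F v))"
  obtains D where "D \<subseteq> F"
    and "card (connected_pairs V (F - D)) < card (connected_pairs V F)"
    and "real (card D) \<le>
           q * (real (card (connected_pairs V F)) - real (card (connected_pairs V (F - D))))"
proof -
  let ?C = "component V F v"
  obtain A B where AB: "A \<union> B = ?C" "A \<inter> B = {}"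
    and "\<not> real (card (cut_edges (induced_edges F ?C) A B)) \<ge> q * real (card A) * real (card B)"
    using sparse unfolding cut_dense_def by blast
  then have few: "real (card (cut_edges (induced_edges F ?C) A B)) < q * real (card A) * real (card B)"
    by (simp only: not_le)
  define D where "D = cut_edges (induced_edges F ?C) A B"
  have "D \<subseteq> F" by (auto simp: D_def cut_edges_def induced_edges_def)
  have AB_sub: "A \<times> B \<subseteq> connected_pairs V F"
  proof -
    have "A \<times> B \<subseteq> ?C \<times> ?C" using AB(1) by auto
    then show ?thesis using component_times_component_subset_connected_pairs by (rule subset_trans)
  qed
  have fin: "finite (connected_pairs V F)" using \<open>finite V\<close> by (rule finite_connected_pairs)
  have "card (connected_pairs V (F - D)) \<le> card (connected_pairs V F - A \<times> B)"
    unfolding D_def by (rule card_mono) (use fin connected_pairs_cut_subset[OF edges AB] in auto)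
  also have "\<dots> = card (connected_pairs V F) - card A * card B"
    using card_Diff_subset[OF finite_subset[OF AB_sub fin] AB_sub]
    by (simp only: card_cartesian_product)
  finally have drop: "card (connected_pairs V (F - D)) + card A * card B \<le> card (connected_pairs V F)"
    using card_mono[OF fin AB_sub] unfolding card_cartesian_product by linarith
  have "0 < q * (real (card A) * real (card B))" using few by (simp add: mult.assoc)
  then have "card A * card B > 0" using \<open>q > 0\<close> by (simp add: zero_less_mult_iff)
  show thesis
  proof
    show "D \<subseteq> F" by fact
    show "card (connected_pairs V (F - D)) < card (connected_pairs V F)"
      using drop \<open>card A * card B > 0\<close> by linarith
    have "real (card D) \<le> q * real (card A * card B)"
      using few by (simp add: D_def mult.assoc)
    also have "\<dots> \<le> q * (real (card (connected_pairs V F)) - real (card (connected_pairs V (F - D))))"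
    proof -
      from drop have "real (card (connected_pairs V (F - D))) + real (card A * card B)
                        \<le> real (card (connected_pairs V F))"
        by (metis of_nat_add of_nat_le_iff)
      with \<open>q > 0\<close> show ?thesis by (intro mult_left_mono) auto
    qed
    finally show "real (card D) \<le> \<dots>" .
  qed
qed

lemma exists_cut_dense_components:
  assumes "finite V" and "\<forall>e\<in>F. e \<subseteq> V" and "q > 0"
  shows "\<exists>F' \<subseteq> F. real (card (F - F')) \<le>
           q * (real (card (connected_pairs V F)) - real (card (connected_pairs V F'))) \<and>
           (\<forall>C \<in> components V F'. cut_dense q C (induced_edges F' C))"
  using assms(2)
proof (induction "card (connected_pairs V F)" arbitrary: F rule: less_induct)
  case less
  let ?\<Phi> = "\<lambda>F. real (card (connected_pairs V F))"
  show ?case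
  proof (cases "\<forall>C \<in> components V F. cut_dense q C (induced_edges F C)")
    case True
    then show ?thesis by (intro exI[of _ F]) simp
  next
    case False
    then obtain v where sparse: "\<not> cut_dense q (component V F v) (induced_edges F (component V F v))"
      unfolding components_def by blast
    obtain D where "D \<subseteq> F"
      and smaller: "card (connected_pairs V (F - D)) < card (connected_pairs V F)"
      and cost: "real (card D) \<le> q * (?\<Phi> F - ?\<Phi> (F - D))"
      using delete_sparse_cut[OF \<open>finite V\<close> less.prems \<open>q > 0\<close> sparse] by blast
    have "\<forall>e\<in>F - D. e \<subseteq> V" using less.prems by blast
    with less.hyps[OF smaller] obtain F' where "F' \<subseteq> F - D"
      and rest: "real (card (F - D - F')) \<le> q * (?\<Phi> (F - D) - ?\<Phi> F')"
      and dense: "\<forall>C \<in> components V F'. cut_dense q C (induced_edges F' C)"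
      by blast
    have "F \<subseteq> Pow V" using less.prems by blast
    then have "finite F" using \<open>finite V\<close> by (simp add: finite_subset)
    have "F - F' = D \<union> (F - D - F')" using \<open>D \<subseteq> F\<close> \<open>F' \<subseteq> F - D\<close> by blast
    moreover have "card (D \<union> (F - D - F')) = card D + card (F - D - F')"
      using \<open>finite F\<close> \<open>D \<subseteq> F\<close> by (intro card_Un_disjoint) (auto intro: finite_subset)
    ultimately have "real (card (F - F')) = real (card D) + real (card (F - D - F'))"
      by simp
    also have "\<dots> \<le> q * (?\<Phi> F - ?\<Phi> (F - D)) + q * (?\<Phi> (F - D) - ?\<Phi> F')"
      using cost rest by (rule add_mono)
    also have "\<dots> = q * (?\<Phi> F - ?\<Phi> F')"
      by (simp add: algebra_simps)
    finally have "real (card (F - F')) \<le> q * (?\<Phi> F - ?\<Phi> F')" .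
    moreover have "F' \<subseteq> F" using \<open>F' \<subseteq> F - D\<close> by blast
    ultimately show ?thesis using dense by blast
  qed
qed

theorem lemma3p13:
  fixes V :: "'a set" and E :: "'a set set" and q :: real
  assumes "simple_graph V E" and "q > 0"
  shows "\<exists>F \<subseteq> E. real (card (E - F)) \<le> q * real (card V) ^ 2 \<and>
           (\<forall>C \<in> components V F. cut_dense q C (induced_edges F C))"
proof -
  have "finite V" and edges: "\<forall>e\<in>E. e \<subseteq> V" using assms(1) by (auto simp: simple_graph_def)
  obtain F where "F \<subseteq> E"
    and cost: "real (card (E - F)) \<le>
                 q * (real (card (connected_pairs V E)) - real (card (connected_pairs V F)))"
    and dense: "\<forall>C \<in> components V F. cut_dense q C (induced_edges F C)"
    using exists_cut_dense_components[OF \<open>finite V\<close> edges \<open>q > 0\<close>] by blast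
  have "real (card (connected_pairs V E)) \<le> real (card V) ^ 2"
    unfolding of_nat_power[symmetric] of_nat_le_iff by (rule card_connected_pairs_le[OF \<open>finite V\<close>])
  then have "real (card (connected_pairs V E)) - real (card (connected_pairs V F))
               \<le> real (card V) ^ 2"
    using of_nat_0_le_iff[of "card (connected_pairs V F)"] by linarith
  then have "q * (real (card (connected_pairs V E)) - real (card (connected_pairs V F)))
               \<le> q * real (card V) ^ 2"
    by (rule mult_left_mono) (use \<open>q > 0\<close> in simp)
  with cost have "real (card (E - F)) \<le> q * real (card V) ^ 2" by (rule order_trans)
  with \<open>F \<subseteq> E\<close> dense show ?thesis by blast
qed

end
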